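(* Every monomial ideal of $\mathcal{A}$ is finitely generated.
   Context: Let $\mathbf{k}$ be a commutative noetherian ring, $r$ a positive integer, $x_1,\dots,x_r$ the standard basis of $\mathbf{k}^r$, and $\mathcal{A}=\bigoplus_{n,d\ge0}(\mathrm{Sym}^d\mathbf{k}^r)^{\otimes n}$, bigraded by $(d,n)$. For a split $\sigma$ of $[n+m]$ (subset $\{i_1<\cdots<i_n\}$ and complement $\{j_1<\cdots<j_m\}$), $\cdot_\sigma:(\mathrm{Sym}^d\mathbf{k}^r)^{\otimes n}\otimes(\mathrm{Sym}^d\mathbf{k}^r)^{\otimes m}\to(\mathrm{Sym}^d\mathbf{k}^r)^{\otimes(n+m)}$ places the first argument's factors in positions $i_k$ and the second's in positions $j_k$; it is $0$ on other bidegrees. $*:(\mathrm{Sym}^d\mathbf{k}^r)^{\otimes n}\otimes(\mathrm{Sym}^e\mathbf{k}^r)^{\otimes n}\to(\mathrm{Sym}^{d+e}\mathbf{k}^r)^{\otimes n}$ is factorwise multiplication, $0$ on other bidegrees. An ideal is a bihomogeneous subspace $I$ with $g*f,\ g\cdot_\sigma f\in I$ for all $f\in I$, $g\in\mathcal{A}$, splits $\sigma$; the ideal generated by a set is the smallest ideal containing it. A monomial is $w_1\otimes\cdots\otimes w_n$ with each $w_i$ a scalar multiple of a monomial in $x_1,\dots,x_r$; a monomial ideal is an ideal generated by monomials. *)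

theory Defs
  imports "HOL-Algebra.Ring_Divisibility"
begin

definition type_ring :: "('k::comm_ring_1) ring" where
  "type_ring = \<lparr>carrier = UNIV, monoid.mult = (*), one = 1, zero = 0, add = (+)\<rparr>"

text \<open>A basis element of (Sym^d k^r)^{tensor n} is a pair (d, ws) where ws is a list of
  length n of exponent vectors (lists of length r) each of total degree d.  The degree d is
  recorded explicitly because for n = 0 the component (Sym^d k^r)^{tensor 0} = k exists
  for every d.\<close>

type_synonym bmon = "nat \<times> nat list list"

definition valid_bmon :: "nat \<Rightarrow> bmon \<Rightarrow> bool" where
  "valid_bmon r b \<longleftrightarrow> (\<forall>w \<in> set (snd b). length w = r \<and> sum_list w = fst b)"

definition inA :: "nat \<Rightarrow> (bmon \<Rightarrow> 'k::comm_ring_1) \<Rightarrow> bool" where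
  "inA r f \<longleftrightarrow> finite {b. f b \<noteq> 0} \<and> (\<forall>b. f b \<noteq> 0 \<longrightarrow> valid_bmon r b)"

definition lift_op :: "(bmon \<Rightarrow> bmon \<Rightarrow> bmon option) \<Rightarrow>
    (bmon \<Rightarrow> 'k::comm_ring_1) \<Rightarrow> (bmon \<Rightarrow> 'k) \<Rightarrow> (bmon \<Rightarrow> 'k)" where
  "lift_op op g f = (\<lambda>b. \<Sum>p \<in> {(b1, b2). g b1 \<noteq> 0 \<and> f b2 \<noteq> 0 \<and> op b1 b2 = Some b}.
       g (fst p) * f (snd p))"

definition star_b :: "bmon \<Rightarrow> bmon \<Rightarrow> bmon option" where
  "star_b b c = (if length (snd b) = length (snd c)
      then Some (fst b + fst c, map2 (map2 (+)) (snd b) (snd c)) else None)"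

definition star_A :: "(bmon \<Rightarrow> 'k::comm_ring_1) \<Rightarrow> (bmon \<Rightarrow> 'k) \<Rightarrow> (bmon \<Rightarrow> 'k)" where
  "star_A g f = lift_op star_b g f"

text \<open>A split sigma of [n+m] is encoded by the set S of the n positions i_1 < ... < i_n
  (0-based: S \<subseteq> {0..<n+m}, card S = n).  The shuffle places the k-th entry of the first
  list at the k-th smallest element of S and the k-th entry of the second list at the k-th
  smallest element of the complement.\<close>

definition shuffle :: "nat set \<Rightarrow> 'a list \<Rightarrow> 'a list \<Rightarrow> 'a list" where
  "shuffle S xs ys = map (\<lambda>i. if i \<in> S then xs ! card {j \<in> S. j < i}
                             else ys ! card {j. j < i \<and> j \<notin> S})
                        [0..<length xs + length ys]"

definition is_split :: "nat \<Rightarrow> nat \<Rightarrow> nat set \<Rightarrow> bool" where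
  "is_split n m S \<longleftrightarrow> S \<subseteq> {0..<n+m} \<and> card S = n"

definition dot_b :: "nat \<Rightarrow> nat \<Rightarrow> nat set \<Rightarrow> bmon \<Rightarrow> bmon \<Rightarrow> bmon option" where
  "dot_b n m S b c = (if length (snd b) = n \<and> length (snd c) = m \<and> fst b = fst c
      then Some (fst b, shuffle S (snd b) (snd c)) else None)"

definition dot_A :: "nat \<Rightarrow> nat \<Rightarrow> nat set \<Rightarrow> (bmon \<Rightarrow> 'k::comm_ring_1) \<Rightarrow> (bmon \<Rightarrow> 'k) \<Rightarrow> (bmon \<Rightarrow> 'k)" where
  "dot_A n m S g f = lift_op (dot_b n m S) g f"

definition hcomp :: "nat \<Rightarrow> nat \<Rightarrow> (bmon \<Rightarrow> 'k::zero) \<Rightarrow> (bmon \<Rightarrow> 'k)" where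
  "hcomp d n f = (\<lambda>b. if fst b = d \<and> length (snd b) = n then f b else 0)"

definition is_A_ideal :: "nat \<Rightarrow> (bmon \<Rightarrow> 'k::comm_ring_1) set \<Rightarrow> bool" where
  "is_A_ideal r I \<longleftrightarrow>
     I \<subseteq> {f. inA r f} \<and>
     (\<lambda>_. 0) \<in> I \<and>
     (\<forall>f \<in> I. \<forall>g \<in> I. (\<lambda>b. f b + g b) \<in> I) \<and>
     (\<forall>c f. f \<in> I \<longrightarrow> (\<lambda>b. c * f b) \<in> I) \<and>
     (\<forall>f \<in> I. \<forall>d n. hcomp d n f \<in> I) \<and>
     (\<forall>f \<in> I. \<forall>g. inA r g \<longrightarrow> star_A g f \<in> I) \<and>
     (\<forall>f \<in> I. \<forall>g. inA r g \<longrightarrow> (\<forall>n m S. is_split n m S \<longrightarrow> dot_A n m S g f \<in> I))"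

definition ideal_gen :: "nat \<Rightarrow> (bmon \<Rightarrow> 'k::comm_ring_1) set \<Rightarrow> (bmon \<Rightarrow> 'k) set" where
  "ideal_gen r G = \<Inter> {I. is_A_ideal r I \<and> G \<subseteq> I}"

definition is_monomial :: "nat \<Rightarrow> (bmon \<Rightarrow> 'k::comm_ring_1) \<Rightarrow> bool" where
  "is_monomial r f \<longleftrightarrow> (\<exists>b c. valid_bmon r b \<and> f = (\<lambda>b'. if b' = b then c else 0))"

definition is_monomial_ideal :: "nat \<Rightarrow> (bmon \<Rightarrow> 'k::comm_ring_1) set \<Rightarrow> bool" where
  "is_monomial_ideal r I \<longleftrightarrow> is_A_ideal r I \<and>
     (\<exists>M. (\<forall>f \<in> M. is_monomial r f) \<and> I = ideal_gen r M)"

definition finitely_generated_A :: "nat \<Rightarrow> (bmon \<Rightarrow> 'k::comm_ring_1) set \<Rightarrow> bool" where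
  "finitely_generated_A r I \<longleftrightarrow> (\<exists>G. finite G \<and> I = ideal_gen r G)"

end

theory Submission
  imports Defs "HOL-Library.Sublist" "HOL-Library.Ramsey"
begin

text \<open>Call a basis monomial \<open>b'\<close> a multiple of \<open>b\<close> if it arises from \<open>b\<close> by raising the
  exponents of every tensor factor and inserting further factors; then \<open>monom b c \<in> J\<close> implies
  \<open>monom b' c \<in> J\<close> for every ideal \<open>J\<close>. By Dickson's and Higman's lemmas this divisibility
  order is a well-quasi-order, so every sequence of basis monomials has a subsequence that is a
  divisibility chain. If a monomial ideal were not finitely generated, it would contain monomial
  generators \<open>s\<^sub>0, s\<^sub>1, \<dots>\<close> each outside the ideal generated by its predecessors. Along a
  divisibility chain of them, the coefficients generate an ascending chain of ideals of the
  noetherian ring \<open>k\<close>, which stabilises; the next term of the chain then lies in the ideal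
  generated by the earlier ones, a contradiction.\<close>

definition good :: "('a \<Rightarrow> 'a \<Rightarrow> bool) \<Rightarrow> (nat \<Rightarrow> 'a) \<Rightarrow> bool" where
  "good P f \<longleftrightarrow> (\<exists>i j. i < j \<and> P (f i) (f j))"

definition almost_full_on :: "('a \<Rightarrow> 'a \<Rightarrow> bool) \<Rightarrow> 'a set \<Rightarrow> bool" where
  "almost_full_on P A \<longleftrightarrow> (\<forall>f. (\<forall>i. f i \<in> A) \<longrightarrow> good P f)"

lemma almost_full_onD:
  fixes f :: "nat \<Rightarrow> 'a"
  assumes "almost_full_on P A" "\<And>i. f i \<in> A"
  shows "\<exists>i j. i < j \<and> P (f i) (f j)"
proof -
  have "(\<forall>i. f i \<in> A) \<longrightarrow> good P f" using assms(1) unfolding almost_full_on_def by (rule spec)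
  with assms(2) show ?thesis unfolding good_def by simp
qed

lemma almost_full_on_imp_homogeneous_subseq:
  fixes f :: "nat \<Rightarrow> 'a"
  assumes af: "almost_full_on P A" and fA: "\<And>i. f i \<in> A"
  obtains \<phi> :: "nat \<Rightarrow> nat" where "strict_mono \<phi>" "\<And>i j. i < j \<Longrightarrow> P (f (\<phi> i)) (f (\<phi> j))"
proof -
  define col where "col X = (if P (f (Min X)) (f (Max X)) then 0 else (1::nat))" for X :: "nat set"
  have "\<forall>x\<in>UNIV. \<forall>y\<in>UNIV. x \<noteq> y \<longrightarrow> col {x, y} < 2" by (simp add: col_def)
  from Ramsey2[OF infinite_UNIV_nat this] obtain Y t where
    Y: "infinite Y" "\<forall>x\<in>Y. \<forall>y\<in>Y. x \<noteq> y \<longrightarrow> col {x, y} = t" by blast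
  define \<phi> where "\<phi> = enumerate Y"
  have mono: "strict_mono \<phi>" unfolding \<phi>_def using Y(1) by (rule strict_mono_enumerate)
  have P_iff: "P (f (\<phi> i)) (f (\<phi> j)) \<longleftrightarrow> t = 0" if "i < j" for i j
  proof -
    have lt: "\<phi> i < \<phi> j" using mono that by (rule strict_monoD)
    have "\<phi> i \<in> Y" "\<phi> j \<in> Y" unfolding \<phi>_def using Y(1) by (simp_all add: enumerate_in_set)
    then have "col {\<phi> i, \<phi> j} = t" using Y(2) lt by (metis less_irrefl)
    moreover have "Min {\<phi> i, \<phi> j} = \<phi> i" "Max {\<phi> i, \<phi> j} = \<phi> j" using lt by auto
    ultimately show ?thesis by (auto simp: col_def split: if_splits)
  qed
  obtain i j where "i < j" "P (f (\<phi> i)) (f (\<phi> j))"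
    using almost_full_onD[OF af, of "f \<circ> \<phi>"] fA by auto
  then have "t = 0" using P_iff by blast
  with mono P_iff show thesis by (intro that) auto
qed

lemma almost_full_on_map:
  assumes "almost_full_on P A" "h ` B \<subseteq> A"
    and "\<And>x y. x \<in> B \<Longrightarrow> y \<in> B \<Longrightarrow> P (h x) (h y) \<Longrightarrow> Q x y"
  shows "almost_full_on Q B"
  unfolding almost_full_on_def good_def
proof (intro allI impI)
  fix f :: "nat \<Rightarrow> _" assume f: "\<forall>i. f i \<in> B"
  then have "h (f i) \<in> A" for i using assms(2) by auto
  then obtain i j where "i < j" "P (h (f i)) (h (f j))"
    using almost_full_onD[OF assms(1), of "\<lambda>i. h (f i)"] by blast
  then show "\<exists>i j. i < j \<and> Q (f i) (f j)" using assms(3) f by blast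
qed

lemma almost_full_on_Times:
  assumes P: "almost_full_on P A" and Q: "almost_full_on Q B"
  shows "almost_full_on (\<lambda>x y. P (fst x) (fst y) \<and> Q (snd x) (snd y)) (A \<times> B)"
  unfolding almost_full_on_def good_def
proof (intro allI impI)
  fix f :: "nat \<Rightarrow> _" assume "\<forall>i. f i \<in> A \<times> B"
  then have fA: "fst (f i) \<in> A" and fB: "snd (f i) \<in> B" for i by (auto simp: mem_Times_iff)
  obtain \<phi> :: "nat \<Rightarrow> nat" where \<phi>: "strict_mono \<phi>" "\<And>i j. i < j \<Longrightarrow> P (fst (f (\<phi> i))) (fst (f (\<phi> j)))"
    using almost_full_on_imp_homogeneous_subseq[OF P, where f = "\<lambda>i. fst (f i)", OF fA] by blast
  have "\<exists>i j. i < j \<and> Q (snd (f (\<phi> i))) (snd (f (\<phi> j)))"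
    by (rule almost_full_onD[OF Q]) (rule fB)
  then obtain i j where "i < j" "Q (snd (f (\<phi> i))) (snd (f (\<phi> j)))" by blast
  with \<phi> show "\<exists>i j. i < j \<and> P (fst (f i)) (fst (f j)) \<and> Q (snd (f i)) (snd (f j))"
    by (intro exI[of _ "\<phi> i"] exI[of _ "\<phi> j"]) (simp add: strict_monoD)
qed

lemma almost_full_on_nat_le: "almost_full_on (\<le>) (UNIV :: nat set)"
  unfolding almost_full_on_def good_def
proof (intro allI impI)
  fix f :: "nat \<Rightarrow> nat"
  define i where "i = arg_min f (\<lambda>_. True)"
  have "f i \<le> f (Suc i)" unfolding i_def by (rule arg_min_nat_le) simp
  then show "\<exists>i j. i < j \<and> f i \<le> f j" by blast
qed

lemma almost_full_on_list_all2_le: "almost_full_on (list_all2 (\<le>)) {w :: nat list. length w = n}"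
proof (induction n)
  case 0
  show ?case unfolding almost_full_on_def good_def by (intro allI impI exI[of _ 0] exI[of _ 1]) simp
next
  case (Suc n)
  have Cons_le: "list_all2 (\<le>) v w"
    if "v \<noteq> []" "w \<noteq> []" "hd v \<le> hd w" "list_all2 (\<le>) (tl v) (tl w)" for v w :: "nat list"
    using that by (cases v; cases w) auto
  show ?case
  proof (rule almost_full_on_map[where h = "\<lambda>w. (hd w, tl w)",
        OF almost_full_on_Times[OF almost_full_on_nat_le Suc.IH]])
    show "(\<lambda>w. (hd w, tl w)) ` {w. length w = Suc n} \<subseteq> UNIV \<times> {w. length w = n}"
      by (simp add: image_subset_iff)
    fix v w :: "nat list" assume "v \<in> {w. length w = Suc n}" "w \<in> {w. length w = Suc n}"
      and "fst (hd v, tl v) \<le> fst (hd w, tl w) \<and> list_all2 (\<le>) (snd (hd v, tl v)) (snd (hd w, tl w))"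
    then show "list_all2 (\<le>) v w" by (auto intro!: Cons_le[of v w])
  qed
qed

text \<open>Nash-Williams' minimal bad sequence: position by position, a shortest element that can
  still be continued to a bad sequence.\<close>

lemma minimal_bad_seq:
  fixes f :: "nat \<Rightarrow> 'a" and size :: "'a \<Rightarrow> nat"
  assumes "\<And>i. f i \<in> A" "\<not> good P f"
  obtains m where "\<And>i. m i \<in> A" "\<not> good P m"
    "\<And>n g. (\<And>i. g i \<in> A) \<Longrightarrow> \<not> good P g \<Longrightarrow> (\<And>k. k < n \<Longrightarrow> g k = m k) \<Longrightarrow> size (m n) \<le> size (g n)"
proof -
  define bad_ext where
    "bad_ext p \<longleftrightarrow> (\<exists>g. (\<forall>i. g i \<in> A) \<and> \<not> good P g \<and> (\<forall>k < length p. g k = p ! k))" for p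
  define nxt where "nxt p = arg_min size (\<lambda>x. bad_ext (p @ [x]))" for p
  have nxt: "bad_ext (p @ [nxt p]) \<and> (\<forall>x. bad_ext (p @ [x]) \<longrightarrow> size (nxt p) \<le> size x)"
    if "bad_ext p" for p
  proof -
    from that obtain g where g: "\<forall>i. g i \<in> A" "\<not> good P g" "\<forall>k < length p. g k = p ! k"
      unfolding bad_ext_def by blast
    then have "bad_ext (p @ [g (length p)])"
      unfolding bad_ext_def by (intro exI[of _ g]) (auto simp: nth_append less_Suc_eq)
    then show ?thesis unfolding nxt_def by (rule arg_min_nat_lemma)
  qed
  define pre where "pre n = rec_nat [] (\<lambda>_ p. p @ [nxt p]) n" for n
  define m where "m n = nxt (pre n)" for n
  have pre_simps: "pre 0 = []" "pre (Suc n) = pre n @ [m n]" for n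
    by (simp_all add: pre_def m_def)
  have pre_eq: "pre n = map m [0..<n]" for n
    by (induction n) (simp_all add: pre_simps)
  have "bad_ext (pre 0)" unfolding bad_ext_def pre_simps using assms by auto
  then have ext: "bad_ext (pre n)" for n
    by (induction n) (simp_all add: pre_simps m_def nxt)
  have "\<exists>g. (\<forall>i. g i \<in> A) \<and> \<not> good P g \<and> (\<forall>k < n. g k = m k)" for n
    using ext[of n] unfolding bad_ext_def pre_eq by auto
  then have mA: "m i \<in> A" and m_bad: "\<not> good P m" for i
    unfolding good_def by (metis lessI less_SucI)+
  show thesis
  proof (rule that[OF mA m_bad])
    fix n g assume "\<And>i. g i \<in> A" "\<not> good P g" "\<And>k. k < n \<Longrightarrow> g k = m k"
    then have "bad_ext (pre n @ [g n])"
      unfolding bad_ext_def pre_eq by (intro exI[of _ g]) (auto simp: nth_append less_Suc_eq)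
    then show "size (m n) \<le> size (g n)" using nxt[OF ext[of n]] by (simp add: m_def)
  qed
qed

text \<open>An embedding between two of the tails would lift to one between the full lists, since
  the heads of \<open>m \<circ> \<phi>\<close> form a \<open>P\<close>-chain.\<close>

lemma bad_seq_prefix_then_tails:
  assumes bad: "\<not> good (list_emb P) m" and m_eq: "\<And>i. m i = h i # t i"
    and \<phi>: "strict_mono \<phi>" "\<And>i j. i < j \<Longrightarrow> P (h (\<phi> i)) (h (\<phi> j))"
  shows "\<not> good (list_emb P) (\<lambda>k. if k < \<phi> 0 then m k else t (\<phi> (k - \<phi> 0)))"
    (is "\<not> good _ ?g")
proof -
  have no_emb: "\<not> list_emb P (m i) (m j)" if "i < j" for i j
    using bad that unfolding good_def by blast
  have \<phi>_ge: "\<phi> 0 \<le> \<phi> k" for k using \<phi>(1) by (simp add: strict_mono_less_eq)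
  have "\<not> list_emb P (?g i) (?g j)" if "i < j" for i j
  proof
    assume emb: "list_emb P (?g i) (?g j)"
    consider "j < \<phi> 0" | "i < \<phi> 0" "\<phi> 0 \<le> j" | "\<phi> 0 \<le> i" using \<open>i < j\<close> by linarith
    then show False
    proof cases
      case 1
      then show False using emb no_emb[OF \<open>i < j\<close>] \<open>i < j\<close> by simp
    next
      case 2
      then have "list_emb P (m i) (t (\<phi> (j - \<phi> 0)))" using emb by simp
      then have "list_emb P (m i) (m (\<phi> (j - \<phi> 0)))"
        unfolding m_eq[of "\<phi> (j - \<phi> 0)"] by (rule list_emb_Cons)
      moreover have "i < \<phi> (j - \<phi> 0)" using 2 \<phi>_ge[of "j - \<phi> 0"] by linarith
      ultimately show False using no_emb by blast
    next
      case 3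
      then have lt: "i - \<phi> 0 < j - \<phi> 0" using \<open>i < j\<close> by linarith
      then have "list_emb P (m (\<phi> (i - \<phi> 0))) (m (\<phi> (j - \<phi> 0)))"
        using emb 3 \<open>i < j\<close> \<phi>(2)[OF lt] by (simp add: m_eq)
      moreover have "\<phi> (i - \<phi> 0) < \<phi> (j - \<phi> 0)" using \<phi>(1) lt by (rule strict_monoD)
      ultimately show False using no_emb by blast
    qed
  qed
  then show ?thesis unfolding good_def by blast
qed

lemma almost_full_on_lists:
  assumes af: "almost_full_on P A"
  shows "almost_full_on (list_emb P) (lists A)"
proof (rule ccontr)
  assume "\<not> almost_full_on (list_emb P) (lists A)"
  then obtain f :: "nat \<Rightarrow> _" where f: "\<And>i. f i \<in> lists A" "\<not> good (list_emb P) f"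
    unfolding almost_full_on_def by blast
  obtain m where mA: "\<And>i. m i \<in> lists A" and m_bad: "\<not> good (list_emb P) m"
    and m_min: "\<And>n g. (\<And>i. g i \<in> lists A) \<Longrightarrow> \<not> good (list_emb P) g \<Longrightarrow>
      (\<And>k. k < n \<Longrightarrow> g k = m k) \<Longrightarrow> length (m n) \<le> length (g n)"
    using minimal_bad_seq[OF f] by blast
  define h where "h i = hd (m i)" for i
  define t where "t i = tl (m i)" for i
  have "m i \<noteq> []" for i
  proof
    assume "m i = []"
    then have "list_emb P (m i) (m (Suc i))" by simp
    with m_bad show False unfolding good_def by blast
  qed
  then have m_eq: "m i = h i # t i" for i by (simp add: h_def t_def)
  have hA: "h i \<in> A" and tA: "t i \<in> lists A" for i
    using mA[of i] unfolding m_eq by auto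
  obtain \<phi> :: "nat \<Rightarrow> nat" where \<phi>: "strict_mono \<phi>" "\<And>i j. i < j \<Longrightarrow> P (h (\<phi> i)) (h (\<phi> j))"
    using almost_full_on_imp_homogeneous_subseq[OF af, where f = h, OF hA] by blast
  define g where "g k = (if k < \<phi> 0 then m k else t (\<phi> (k - \<phi> 0)))" for k
  have g_bad: "\<not> good (list_emb P) g"
    unfolding g_def using bad_seq_prefix_then_tails[OF m_bad m_eq \<phi>] .
  have gA: "g i \<in> lists A" for i using mA tA by (simp add: g_def)
  have "length (m (\<phi> 0)) \<le> length (g (\<phi> 0))"
    by (rule m_min[OF gA g_bad]) (simp add: g_def)
  then show False by (simp add: g_def m_eq)
qed

text \<open>Raising exponents factorwise is multiplication by \<open>*\<close>; inserting factors is \<open>\<cdot>\<^sub>\<sigma>\<close>.\<close>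

definition bmon_le :: "bmon \<Rightarrow> bmon \<Rightarrow> bool" where
  "bmon_le b b' \<longleftrightarrow> fst b \<le> fst b' \<and> list_emb (list_all2 (\<le>)) (snd b) (snd b')"

lemma almost_full_on_bmon_le: "almost_full_on bmon_le {b. valid_bmon r b}"
  by (rule almost_full_on_map[where h = id, OF almost_full_on_Times[OF almost_full_on_nat_le
        almost_full_on_lists[OF almost_full_on_list_all2_le]]])
    (auto simp: valid_bmon_def bmon_le_def)

definition monom :: "bmon \<Rightarrow> 'k::zero \<Rightarrow> bmon \<Rightarrow> 'k" where
  "monom b c = (\<lambda>x. if x = b then c else 0)"

lemma monom_zero [simp]: "monom b 0 = (\<lambda>_. 0)"
  by (simp add: monom_def fun_eq_iff)

lemma inA_monom: "valid_bmon r b \<Longrightarrow> inA r (monom b c)"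
  by (auto simp: inA_def monom_def)

lemma lift_op_monom:
  fixes c :: "'k::comm_ring_1"
  assumes "op b1 b2 = Some b"
  shows "lift_op op (monom b1 1) (monom b2 c) = monom b c"
proof (cases "c = 0")
  case True
  then show ?thesis by (simp add: lift_op_def monom_def)
next
  case False
  then have "(1::'k) \<noteq> 0" by (metis mult_1 mult_zero_left)
  with False assms have "{(u, v). monom b1 1 u \<noteq> (0::'k) \<and> monom b2 c v \<noteq> 0 \<and> op u v = Some x} =
      (if x = b then {(b1, b2)} else {})" for x
    by (auto simp: monom_def)
  then show ?thesis by (auto simp: lift_op_def monom_def)
qed

lemma shuffle_singleton:
  assumes "p \<le> length ws"
  shows "shuffle {p} [v] ws = take p ws @ v # drop p ws"
proof (rule nth_equalityI)
  show "length (shuffle {p} [v] ws) = length (take p ws @ v # drop p ws)"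
    using assms by (simp add: shuffle_def)
  fix i assume "i < length (shuffle {p} [v] ws)"
  then have i: "i < Suc (length ws)" by (simp add: shuffle_def)
  consider "i < p" | "i = p" | "p < i" by linarith
  then show "shuffle {p} [v] ws ! i = (take p ws @ v # drop p ws) ! i"
  proof cases
    case 1
    then have "{j. j < i \<and> j \<notin> {p}} = {..<i}" by auto
    then show ?thesis using 1 i assms by (simp add: shuffle_def nth_append del: upt_Suc)
  next
    case 2
    then show ?thesis using assms i by (simp add: shuffle_def nth_append del: upt_Suc cong: conj_cong)
  next
    case 3
    then have "{j. j < i \<and> j \<notin> {p}} = {..<i} - {p}" by auto
    then have "card {j. j < i \<and> j \<notin> {p}} = i - 1" using 3 by simp
    then show ?thesis using 3 i assms by (simp add: shuffle_def nth_append min_def del: upt_Suc)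
  qed
qed

lemma is_A_ideal_zero: "is_A_ideal r J \<Longrightarrow> (\<lambda>_. 0) \<in> J"
  and is_A_ideal_add: "is_A_ideal r J \<Longrightarrow> f \<in> J \<Longrightarrow> g \<in> J \<Longrightarrow> (\<lambda>b. f b + g b) \<in> J"
  and is_A_ideal_smult: "is_A_ideal r J \<Longrightarrow> f \<in> J \<Longrightarrow> (\<lambda>b. c * f b) \<in> J"
  and is_A_ideal_star: "is_A_ideal r J \<Longrightarrow> f \<in> J \<Longrightarrow> inA r g \<Longrightarrow> star_A g f \<in> J"
  and is_A_ideal_dot: "is_A_ideal r J \<Longrightarrow> f \<in> J \<Longrightarrow> inA r g \<Longrightarrow> is_split n m S \<Longrightarrow>
    dot_A n m S g f \<in> J"
  unfolding is_A_ideal_def by blast+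

lemma monom_insert_mem:
  assumes J: "is_A_ideal r J" and v: "length v = r" "sum_list v = d"
    and mem: "monom (d, us @ ws) c \<in> J"
  shows "monom (d, us @ v # ws) c \<in> J"
proof -
  have "valid_bmon r (d, [v])" using v by (simp add: valid_bmon_def)
  moreover have "is_split 1 (length (us @ ws)) {length us}" by (simp add: is_split_def)
  ultimately have "dot_A 1 (length (us @ ws)) {length us} (monom (d, [v]) 1) (monom (d, us @ ws) c) \<in> J"
    using is_A_ideal_dot[OF J mem inA_monom] by blast
  moreover have "dot_b 1 (length (us @ ws)) {length us} (d, [v]) (d, us @ ws) = Some (d, us @ v # ws)"
    using shuffle_singleton[of "length us" "us @ ws" v] by (simp add: dot_b_def)
  ultimately show ?thesis by (simp add: dot_A_def lift_op_monom)
qed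

lemma monom_subseq_mem:
  assumes J: "is_A_ideal r J" and "subseq xs ys"
    and "\<forall>v \<in> set ys. length v = r \<and> sum_list v = d" and "monom (d, pre @ xs) c \<in> J"
  shows "monom (d, pre @ ys) c \<in> J"
  using assms(2-)
proof (induction ys arbitrary: xs pre rule: list.induct)
  case Nil
  then show ?case using list_emb_Nil2 by fastforce
next
  case (Cons y ys)
  show ?case
  proof (cases "xs \<noteq> [] \<and> hd xs = y \<and> subseq (tl xs) ys")
    case True
    then have "monom (d, (pre @ [y]) @ tl xs) c \<in> J" using Cons.prems(3) by (cases xs) auto
    then show ?thesis using Cons.IH[of "tl xs" "pre @ [y]"] True Cons.prems(2) by simp
  next
    case False
    then have "subseq xs ys" using Cons.prems(1) by (cases xs) auto
    then have "monom (d, pre @ ys) c \<in> J" using Cons.IH Cons.prems(2,3) by simp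
    then show ?thesis using monom_insert_mem[OF J] Cons.prems(2) by simp
  qed
qed

lemma list_all2_le_diff:
  fixes w u :: "nat list"
  assumes "list_all2 (\<le>) w u"
  shows "map2 (+) (map2 (-) u w) w = u \<and> length (map2 (-) u w) = length u \<and>
    sum_list (map2 (-) u w) = sum_list u - sum_list w \<and> sum_list w \<le> sum_list u"
  using assms by (induction rule: list_all2_induct) (auto simp: list_all2_lengthD)

lemma ex_star_b_cofactor:
  assumes "list_all2 (list_all2 (\<le>)) ws us" "valid_bmon r (d, ws)" "valid_bmon r (D, us)" "d \<le> D"
  shows "\<exists>ds. valid_bmon r (D - d, ds) \<and> star_b (D - d, ds) (d, ws) = Some (D, us)"
  using assms
proof (induction rule: list_all2_induct)
  case Nil
  then show ?case by (auto simp: valid_bmon_def star_b_def)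
next
  case (Cons w ws u us)
  then obtain ds where ds: "valid_bmon r (D - d, ds)" "star_b (D - d, ds) (d, ws) = Some (D, us)"
    by (auto simp: valid_bmon_def)
  have "map2 (+) (map2 (-) u w) w = u" "length (map2 (-) u w) = r" "sum_list (map2 (-) u w) = D - d"
    using list_all2_le_diff[OF Cons.hyps(1)] Cons.prems by (auto simp: valid_bmon_def)
  then show ?case using ds
    by (intro exI[of _ "map2 (-) u w # ds"]) (auto simp: valid_bmon_def star_b_def split: if_splits)
qed

lemma list_emb_imp_list_all2_subseq:
  "list_emb P xs ys \<Longrightarrow> \<exists>us. list_all2 P xs us \<and> subseq us ys"
proof (induction rule: list_emb.induct)
  case (list_emb_Cons2 x y xs ys)
  then show ?case by (auto intro: list_all2_Cons[THEN iffD2])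
qed auto

lemma monom_mem_if_bmon_le:
  assumes J: "is_A_ideal r J" and "valid_bmon r b" "valid_bmon r b'" "bmon_le b b'"
    and mem: "monom b c \<in> J"
  shows "monom b' c \<in> J"
proof -
  obtain d ws D ws' where b: "b = (d, ws)" and b': "b' = (D, ws')" by fastforce
  obtain us where us: "list_all2 (list_all2 (\<le>)) ws us" "subseq us ws'"
    using assms(4) list_emb_imp_list_all2_subseq unfolding b b' bmon_le_def by fastforce
  have "valid_bmon r (D, us)"
    using us(2) assms(3) unfolding b' valid_bmon_def by (auto dest: list_emb_set)
  moreover have "valid_bmon r (d, ws)" "d \<le> D" using assms(2,4) unfolding b b' bmon_le_def by auto
  ultimately obtain ds where ds: "valid_bmon r (D - d, ds)" "star_b (D - d, ds) (d, ws) = Some (D, us)"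
    using ex_star_b_cofactor[OF us(1)] by blast
  have "star_A (monom (D - d, ds) 1) (monom (d, ws) c) \<in> J"
    using is_A_ideal_star[OF J mem[unfolded b] inA_monom[OF ds(1)]] .
  then have "monom (D, [] @ us) c \<in> J" by (simp add: star_A_def lift_op_monom[where op = star_b, OF ds(2)])
  then show ?thesis
    using monom_subseq_mem[OF J us(2), where pre = "[]"] assms(3) unfolding b' valid_bmon_def by simp
qed

lemma type_ring_simps [simp]:
  "carrier type_ring = UNIV" "mult type_ring = (*)" "add type_ring = (+)"
  "zero type_ring = 0" "one type_ring = 1"
  by (simp_all add: type_ring_def)

lemma cring_type_ring: "cring (type_ring :: 'k::comm_ring_1 ring)"
proof (rule cringI)
  show "abelian_group (type_ring :: 'k ring)"
    by (rule abelian_groupI) (auto simp: algebra_simps intro: exI[of _ "- _"])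
  show "comm_monoid (type_ring :: 'k ring)"
    by (rule comm_monoidI) (auto simp: algebra_simps)
qed (simp add: algebra_simps)

lemma ideal_monom_coeffs:
  fixes J :: "(bmon \<Rightarrow> 'k::comm_ring_1) set"
  assumes J: "is_A_ideal r J"
  shows "ideal {c. monom b c \<in> J} (type_ring :: 'k ring)"
proof -
  interpret cring "type_ring :: 'k ring" by (rule cring_type_ring)
  have add: "monom b (x + y) \<in> J" if "monom b x \<in> J" "monom b y \<in> J" for x y :: 'k
  proof -
    have "(\<lambda>v. monom b x v + monom b y v) = monom b (x + y)" by (simp add: monom_def fun_eq_iff)
    then show ?thesis using is_A_ideal_add[OF J that] by simp
  qed
  have smult: "monom b (a * x) \<in> J" if "monom b x \<in> J" for a x :: 'k
  proof -
    have "(\<lambda>v. a * monom b x v) = monom b (a * x)" by (simp add: monom_def fun_eq_iff)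
    then show ?thesis using is_A_ideal_smult[OF J that, of a] by simp
  qed
  have uminus: "\<ominus>\<^bsub>type_ring\<^esub> x = - x" for x :: 'k
    by (rule minus_equality) auto
  show ?thesis
  proof (rule idealI)
    show "ring (type_ring :: 'k ring)" by (rule ring_axioms)
    show "subgroup {c. monom b c \<in> J} (add_monoid type_ring)"
    proof (rule add.subgroupI)
      have "0 \<in> {c. monom b c \<in> J}" using is_A_ideal_zero[OF J] by simp
      then show "{c. monom b c \<in> J} \<noteq> {}" by blast
    qed (use add smult[of _ "- 1"] uminus in auto)
  qed (use smult in \<open>auto simp: mult.commute\<close>)
qed

lemma (in noetherian_ring) ex_in_genideal_of_prefix:
  assumes "range c \<subseteq> carrier R"
  shows "\<exists>j. c (Suc j) \<in> Idl (c ` {..j})"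
proof -
  define C where "C j = Idl (c ` {..j})" for j
  have C_ideal: "ideal (C j) R" for j
    unfolding C_def using assms by (intro genideal_ideal) auto
  have C_mono: "C i \<subseteq> C j" if "i \<le> j" for i j
  proof -
    have "c ` {..i} \<subseteq> C j"
      using genideal_self[of "c ` {..j}"] assms that unfolding C_def by fastforce
    then show ?thesis unfolding C_def[of i] by (rule genideal_minimal[OF C_ideal])
  qed
  have "subset.chain {I. ideal I R} (range C)"
    unfolding subset.chain_def
  proof (intro conjI ballI)
    show "range C \<subseteq> {I. ideal I R}" using C_ideal by auto
    fix x y assume "x \<in> range C" "y \<in> range C"
    then obtain a b where "x = C a" "y = C b" by blast
    then show "(\<subset>)\<^sup>=\<^sup>= x y \<or> (\<subset>)\<^sup>=\<^sup>= y x"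
      using C_mono[of a b] C_mono[of b a] by (cases "a \<le> b") auto
  qed
  then have "\<Union>(range C) \<in> range C" by (intro ideal_chain_is_trivial) auto
  then obtain j where "\<Union>(range C) = C j" by blast
  moreover have "c (Suc j) \<in> C (Suc j)"
    unfolding C_def using assms by (intro genideal_self[THEN subsetD]) auto
  ultimately show ?thesis unfolding C_def by blast
qed

lemma ex_seq_avoiding:
  assumes "\<And>F. finite F \<Longrightarrow> F \<subseteq> M \<Longrightarrow> \<exists>x \<in> M. x \<notin> G F"
  shows "\<exists>s :: nat \<Rightarrow> 'a. \<forall>k. s k \<in> M \<and> s k \<notin> G (s ` {..<k})"
proof -
  define nxt where "nxt F = (SOME x. x \<in> M \<and> x \<notin> G F)" for F
  have nxt: "nxt F \<in> M \<and> nxt F \<notin> G F" if "finite F" "F \<subseteq> M" for F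
  proof -
    from assms[OF that] have "\<exists>x. x \<in> M \<and> x \<notin> G F" by blast
    then show ?thesis unfolding nxt_def by (rule someI_ex)
  qed
  define pre where "pre n = rec_nat [] (\<lambda>_ p. p @ [nxt (set p)]) n" for n
  define s where "s k = nxt (set (pre k))" for k
  have pre_simps: "pre 0 = []" "pre (Suc n) = pre n @ [s n]" for n
    by (simp_all add: pre_def s_def)
  have "pre n = map s [0..<n]" for n
    by (induction n) (simp_all add: pre_simps)
  then have "set (pre k) = s ` {..<k}" for k
    by (simp add: atLeast0LessThan)
  then have s_eq: "s k = nxt (s ` {..<k})" for k
    by (subst s_def) simp
  have "s k \<in> M \<and> s k \<notin> G (s ` {..<k})" for k
  proof (induction k rule: less_induct)
    case (less k)
    then have "s ` {..<k} \<subseteq> M" by auto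
    then show ?case unfolding s_eq[of k] using nxt[of "s ` {..<k}"] by simp
  qed
  then show ?thesis by blast
qed

lemma not_finitely_generated_imp_ex_not_in_ideal_gen:
  assumes "\<not> finitely_generated_A r (ideal_gen r M)" "finite F" "F \<subseteq> M"
  shows "\<exists>f \<in> M. f \<notin> ideal_gen r F"
proof (rule ccontr)
  assume "\<not> (\<exists>f \<in> M. f \<notin> ideal_gen r F)"
  then have "ideal_gen r M = ideal_gen r F"
    using \<open>F \<subseteq> M\<close> unfolding ideal_gen_def by blast
  then show False using assms(1,2) unfolding finitely_generated_A_def by blast
qed

text \<open>The coefficients along a divisibility chain of basis monomials generate an ascending
  chain of ideals of the coefficient ring; where it stabilises, the next term is a combination
  of earlier ones moved up to its basis monomial.\<close>

lemma monomial_seq_ex_in_ideal_gen_prefix: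
  fixes s :: "nat \<Rightarrow> bmon \<Rightarrow> 'k::comm_ring_1"
  assumes "noetherian_ring (type_ring :: 'k ring)" and "\<And>k. is_monomial r (s k)"
  shows "\<exists>N. s N \<in> ideal_gen r (s ` {..<N})"
proof -
  interpret noetherian_ring "type_ring :: 'k ring" by (rule assms(1))
  have "\<exists>b c. valid_bmon r b \<and> s k = monom b c" for k
    using assms(2) unfolding is_monomial_def monom_def by blast
  then obtain b c where b: "\<And>k. valid_bmon r (b k)" and s_eq: "\<And>k. s k = monom (b k) (c k)"
    by metis
  obtain \<phi> :: "nat \<Rightarrow> nat" where \<phi>: "strict_mono \<phi>" "\<And>i j. i < j \<Longrightarrow> bmon_le (b (\<phi> i)) (b (\<phi> j))"
    using almost_full_on_imp_homogeneous_subseq[OF almost_full_on_bmon_le, where f = b] b by blast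
  obtain j where j: "c (\<phi> (Suc j)) \<in> Idl\<^bsub>type_ring\<^esub> ((c \<circ> \<phi>) ` {..j})"
    using ex_in_genideal_of_prefix[of "c \<circ> \<phi>"] by auto
  define N where "N = \<phi> (Suc j)"
  have "s N \<in> J" if J: "is_A_ideal r J" "s ` {..<N} \<subseteq> J" for J
  proof -
    have "(c \<circ> \<phi>) ` {..j} \<subseteq> {x. monom (b N) x \<in> J}"
    proof clarify
      fix i assume "i \<le> j"
      then have "\<phi> i < N" "bmon_le (b (\<phi> i)) (b N)"
        using \<phi> unfolding N_def by (auto simp: strict_mono_less)
      then show "monom (b N) ((c \<circ> \<phi>) i) \<in> J"
        using monom_mem_if_bmon_le[OF J(1) b b] J(2) s_eq by auto
    qed
    then have "Idl\<^bsub>type_ring\<^esub> ((c \<circ> \<phi>) ` {..j}) \<subseteq> {x. monom (b N) x \<in> J}"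
      by (rule genideal_minimal[OF ideal_monom_coeffs[OF J(1)]])
    then show "s N \<in> J" using j s_eq unfolding N_def by auto
  qed
  then show ?thesis unfolding ideal_gen_def by blast
qed

theorem corollary2p5:
  fixes r :: nat and I :: "(bmon \<Rightarrow> 'k::comm_ring_1) set"
  assumes "noetherian_ring (type_ring :: 'k ring)"
    and "r > 0"
    and "is_monomial_ideal r I"
  shows "finitely_generated_A r I"
proof (rule ccontr)
  assume not_fg: "\<not> finitely_generated_A r I"
  obtain M where M: "\<forall>f \<in> M. is_monomial r f" and I: "I = ideal_gen r M"
    using assms(3) unfolding is_monomial_ideal_def by blast
  obtain s :: "nat \<Rightarrow> _" where "\<forall>k. s k \<in> M \<and> s k \<notin> ideal_gen r (s ` {..<k})"
    using ex_seq_avoiding[of M "ideal_gen r", OF not_finitely_generated_imp_ex_not_in_ideal_gen]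
      not_fg unfolding I by blast
  moreover from this M have "\<exists>N. s N \<in> ideal_gen r (s ` {..<N})"
    by (intro monomial_seq_ex_in_ideal_gen_prefix[OF assms(1)]) blast
  ultimately show False by blast
qed

end
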